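(* Let $0<\lambda<1$, let $c>0$, and let $A \subseteq \mathbb{N}$. Suppose that $$\sum_{a \in A[x]} w(a) \sim \exp(c x^{1-\lambda}).$$ Then $$\liminf_{x \to \infty} \frac{\pi_A(x + x^\lambda) - \pi_A(x)}{x^\lambda/\log(x)} \ge \frac{1 - \exp[c(\lambda-1)]}{c(1-\lambda)}.$$
   Context: Fix $0<\lambda<1$. For $c>0$ and $x>0$, define $w(x) = \frac{c(1-\lambda)\log(x)\exp(c x^{1-\lambda})}{x^\lambda}$. Here $\mathbb{N} = \{1,2,3,\dots\}$. For $A \subseteq \mathbb{N}$ and $x\in\mathbb{R}$, write $A[x] = \{a \in A : a \le x\}$ and $\pi_A(x) = \# A[x]$. $f\sim g$ means $f(x)/g(x)\to 1$ as $x\to\infty$. *)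

theory Defs
  imports "HOL-Analysis.Analysis" "HOL-Library.Landau_Symbols"
begin

definition w :: "real \<Rightarrow> real \<Rightarrow> real \<Rightarrow> real" where
  "w lam c x = c * (1 - lam) * ln x * exp (c * x powr (1 - lam)) / x powr lam"

definition upto_set :: "nat set \<Rightarrow> real \<Rightarrow> nat set" where
  "upto_set A x = {a \<in> A. real a \<le> x}"

definition piA :: "nat set \<Rightarrow> real \<Rightarrow> nat" where
  "piA A x = card (upto_set A x)"

end

theory Submission
  imports Defs "HOL-Real_Asymp.Real_Asymp"
begin

text \<open>Write \<open>S(x)\<close> for the weighted sum over \<open>A[x]\<close>, \<open>E(x) = exp(c x\<^sup>1\<^sup>-\<^sup>\<lambda>)\<close> and
  \<open>h = x\<^sup>\<lambda>\<close>. On the window \<open>(x, x + h]\<close> the weight is at most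
  \<open>c(1 - \<lambda>) log(x + h) E(x + h) / h\<close>, so \<open>S(x + h) - S(x)\<close> is at most that bound times
  \<open>\<pi>\<^sub>A(x + h) - \<pi>\<^sub>A(x)\<close>. Dividing by \<open>E(x + h)\<close>, the left side becomes
  \<open>S(x + h)/E(x + h) - (S(x)/E(x)) (E(x)/E(x + h))\<close>, which tends to \<open>1 - exp(c(\<lambda> - 1))\<close>
  because \<open>S \<sim> E\<close> and \<open>(x + h)\<^sup>1\<^sup>-\<^sup>\<lambda> - x\<^sup>1\<^sup>-\<^sup>\<lambda> \<rightarrow> 1 - \<lambda>\<close>; finally
  \<open>log(x + h) \<sim> log x\<close>.\<close>

lemma finite_upto_set: "finite (upto_set A x)"
proof (rule finite_subset)
  show "upto_set A x \<subseteq> {..nat \<lfloor>x\<rfloor>}"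
    by (auto simp: upto_set_def le_nat_floor)
qed simp

lemma upto_set_add_window:
  assumes "0 \<le> h"
  shows "upto_set A (x + h) = upto_set A x \<union> {a \<in> A. x < real a \<and> real a \<le> x + h}"
    and "upto_set A x \<inter> {a \<in> A. x < real a \<and> real a \<le> x + h} = {}"
  using assms by (auto simp: upto_set_def)

lemma w_le_window_bound:
  assumes "0 < lam" "lam < 1" "0 < c" "1 \<le> x" "x \<le> y" "y \<le> z"
  shows "w lam c y \<le> c * (1 - lam) * ln z * exp (c * z powr (1 - lam)) / x powr lam"
  unfolding w_def
proof (rule frac_le)
  have "ln y \<le> ln z" "0 \<le> ln y" using assms by auto
  moreover have "exp (c * y powr (1 - lam)) \<le> exp (c * z powr (1 - lam))"
    using assms by (simp add: powr_mono2)
  ultimately show "c * (1 - lam) * ln y * exp (c * y powr (1 - lam))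
      \<le> c * (1 - lam) * ln z * exp (c * z powr (1 - lam))"
    using assms by (intro mult_mono mult_left_mono) auto
  show "0 \<le> c * (1 - lam) * ln z * exp (c * z powr (1 - lam))"
    using assms by simp
  show "x powr lam \<le> y powr lam" using assms by (simp add: powr_mono2)
qed (use assms in simp)

lemma sum_w_increment_le:
  assumes "0 < lam" "lam < 1" "0 < c" "1 \<le> x" "0 \<le> h"
  shows "(\<Sum>a\<in>upto_set A (x + h). w lam c (real a)) - (\<Sum>a\<in>upto_set A x. w lam c (real a))
    \<le> (real (piA A (x + h)) - real (piA A x))
        * (c * (1 - lam) * ln (x + h) * exp (c * (x + h) powr (1 - lam)) / x powr lam)"
proof -
  define B where "B = {a \<in> A. x < real a \<and> real a \<le> x + h}"
  note split = upto_set_add_window[OF assms(5), of A x, folded B_def]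
  have "finite B" using finite_upto_set[of A "x + h"] split(1) by simp
  have "(\<Sum>a\<in>B. w lam c (real a))
      \<le> (\<Sum>a\<in>B. c * (1 - lam) * ln (x + h) * exp (c * (x + h) powr (1 - lam)) / x powr lam)"
    using assms by (intro sum_mono w_le_window_bound) (auto simp: B_def)
  then show ?thesis
    unfolding piA_def split(1)
    by (simp add: sum.union_disjoint[OF finite_upto_set \<open>finite B\<close> split(2)]
      card_Un_disjoint[OF finite_upto_set \<open>finite B\<close> split(2)])
qed

definition window_lower_bound :: "real \<Rightarrow> real \<Rightarrow> (real \<Rightarrow> real) \<Rightarrow> real \<Rightarrow> real" where
  "window_lower_bound lam c r x =
     (r (x + x powr lam) - r x * exp (c * (x powr (1 - lam) - (x + x powr lam) powr (1 - lam))))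
       * (ln x / ln (x + x powr lam)) / (c * (1 - lam))"

lemma piA_increment_ge_window_lower_bound:
  fixes A :: "nat set"
  assumes lam: "0 < lam" "lam < 1" and c: "0 < c" and x: "1 < x"
  defines "S \<equiv> \<lambda>y. \<Sum>a\<in>upto_set A y. w lam c (real a)"
    and "E \<equiv> \<lambda>y. exp (c * y powr (1 - lam))"
  shows "window_lower_bound lam c (\<lambda>y. S y / E y) x
    \<le> (real (piA A (x + x powr lam)) - real (piA A x)) / (x powr lam / ln x)"
proof -
  define h where "h = x powr lam"
  have "0 < h" using x by (simp add: h_def)
  then have pos: "0 < ln x" "0 < ln (x + h)" "0 < E x" "0 < E (x + h)" "0 < c * (1 - lam)"
    using x lam c by (auto simp: E_def)
  have ratio: "exp (c * (x powr (1 - lam) - (x + h) powr (1 - lam))) = E x / E (x + h)"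
    by (simp add: E_def exp_diff[symmetric] algebra_simps)
  define K where "K = c * (1 - lam) * ln (x + h) * E (x + h)"
  have "0 < K" using pos by (simp add: K_def)
  have "window_lower_bound lam c (\<lambda>y. S y / E y) x = (S (x + h) - S x) * (ln x / K)"
    unfolding window_lower_bound_def h_def[symmetric] ratio K_def
    using pos by (simp add: field_simps)
  also have "\<dots> \<le> (real (piA A (x + h)) - real (piA A x)) * (K / h) * (ln x / K)"
    using sum_w_increment_le[OF lam c, of x h A] x pos \<open>0 < h\<close>
    by (intro mult_right_mono) (auto simp: S_def E_def h_def K_def)
  also have "\<dots> = (real (piA A (x + h)) - real (piA A x)) / (h / ln x)"
    using \<open>0 < K\<close> by simp
  finally show ?thesis by (simp add: h_def)
qed

lemma window_lower_bound_tendsto: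
  assumes lam: "0 < lam" "lam < 1" and c: "0 < c" and r: "(r \<longlongrightarrow> 1) at_top"
  shows "(window_lower_bound lam c r \<longlongrightarrow> (1 - exp (c * (lam - 1))) / (c * (1 - lam))) at_top"
proof -
  have "filterlim (\<lambda>x::real. x + x powr lam) at_top at_top" using lam by real_asymp
  with r have r_shift: "((\<lambda>x. r (x + x powr lam)) \<longlongrightarrow> 1) at_top"
    by (rule filterlim_compose)
  have "((\<lambda>x::real. x powr (1 - lam) - (x + x powr lam) powr (1 - lam)) \<longlongrightarrow> lam - 1) at_top"
    using lam by real_asymp
  then have exp_ratio: "((\<lambda>x. exp (c * (x powr (1 - lam) - (x + x powr lam) powr (1 - lam))))
      \<longlongrightarrow> exp (c * (lam - 1))) at_top"
    by (intro tendsto_exp tendsto_mult_left)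
  have log_ratio: "((\<lambda>x::real. ln x / ln (x + x powr lam)) \<longlongrightarrow> 1) at_top"
    using lam by real_asymp
  have "(window_lower_bound lam c r
      \<longlongrightarrow> (1 - 1 * exp (c * (lam - 1))) * 1 / (c * (1 - lam))) at_top"
    unfolding window_lower_bound_def using lam c
    by (intro tendsto_divide tendsto_mult tendsto_diff r_shift r exp_ratio log_ratio tendsto_const) auto
  then show ?thesis by simp
qed

theorem mainTheorem5:
  fixes lam c :: real and A :: "nat set"
  assumes "0 < lam" "lam < 1" "0 < c"
    and "A \<subseteq> {1..}"
    and "(\<lambda>x. \<Sum>a\<in>upto_set A x. w lam c (real a)) \<sim>[at_top] (\<lambda>x. exp (c * x powr (1 - lam)))"
  shows "Liminf at_top (\<lambda>x::real. ereal ((real (piA A (x + x powr lam)) - real (piA A x))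
            / (x powr lam / ln x)))
         \<ge> ereal ((1 - exp (c * (lam - 1))) / (c * (1 - lam)))"
proof -
  note lam = assms(1,2) and c = assms(3)
  define r where "r = (\<lambda>y. (\<Sum>a\<in>upto_set A y. w lam c (real a)) / exp (c * y powr (1 - lam)))"
  have "(r \<longlongrightarrow> 1) at_top"
    unfolding r_def using asymp_equivD_strong[OF assms(5)] by simp
  then have "ereal ((1 - exp (c * (lam - 1))) / (c * (1 - lam)))
      = Liminf at_top (\<lambda>x. ereal (window_lower_bound lam c r x))"
    by (intro lim_imp_Liminf[symmetric] tendsto_ereal window_lower_bound_tendsto lam c) auto
  also have "\<dots> \<le> Liminf at_top (\<lambda>x::real. ereal ((real (piA A (x + x powr lam)) - real (piA A x))
      / (x powr lam / ln x)))"
    using eventually_gt_at_top[of "1::real"]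
    by (intro Liminf_mono, elim eventually_mono)
      (unfold r_def ereal_less_eq, rule piA_increment_ge_window_lower_bound[OF lam c])
  finally show ?thesis .
qed

end
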